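(* Let $\Pi\subseteq\Sigma$. The cone $\sigma_\Pi$ contains a nonzero linear subspace of $N_\mathbb{R}$ if and only if $\sigma^1_\Pi\cap\sigma^2_\Pi\ne\{0\}$.
   Context: $N\cong\mathbb{Z}^d$, $\sigma\subset N_\mathbb{R}$ a strongly convex rational polyhedral cone of dimension $d$, $\Sigma=\sigma(1)$ its set of rays, $n(\rho)$ the primitive generator of $\rho$. $\sigma_\Pi$ is the cone generated over $\mathbb{R}_{\ge0}$ by $-n(\rho)$, $\rho\in\Pi$, and $n(\rho)$, $\rho\in\Sigma\setminus\Pi$; $\sigma^1_\Pi$ is the cone generated over $\mathbb{R}_{\ge0}$ by $n(\rho)$, $\rho\in\Pi$; $\sigma^2_\Pi$ is the cone generated over $\mathbb{R}_{\ge0}$ by $n(\rho)$, $\rho\in\Sigma\setminus\Pi$ (the cone generated by the empty set is $\{0\}$). *)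

theory Defs
  imports "HOL-Analysis.Analysis"
begin

text \<open>Lattice N = Z^d realised as the integer points of real^'d (d = CARD('d)).\<close>
definition lattice_pt :: "real^'d \<Rightarrow> bool" where
  "lattice_pt x \<longleftrightarrow> (\<forall>i. x $ i \<in> \<int>)"

definition gen_cone :: "(real^'d) set \<Rightarrow> (real^'d) set" where
  "gen_cone S = {y. \<exists>c. (\<forall>v\<in>S. 0 \<le> c v) \<and> y = (\<Sum>v\<in>S. c v *\<^sub>R v)}"

definition rational_polyhedral_cone :: "(real^'d) set \<Rightarrow> bool" where
  "rational_polyhedral_cone \<sigma> \<longleftrightarrow>
     (\<exists>S. finite S \<and> (\<forall>v\<in>S. lattice_pt v) \<and> \<sigma> = gen_cone S)"

definition strongly_convex :: "(real^'d) set \<Rightarrow> bool" where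
  "strongly_convex \<sigma> \<longleftrightarrow> \<sigma> \<inter> uminus ` \<sigma> = {0}"

definition rays :: "(real^'d) set \<Rightarrow> (real^'d) set set" where
  "rays \<sigma> = {\<rho>. \<rho> face_of \<sigma> \<and> aff_dim \<rho> = 1}"

definition prim_gen :: "(real^'d) set \<Rightarrow> real^'d" where
  "prim_gen \<rho> = (THE v. v \<in> \<rho> \<and> v \<noteq> 0 \<and> lattice_pt v \<and>
                    (\<forall>w\<in>\<rho>. lattice_pt w \<longrightarrow> (\<exists>k::nat. w = real k *\<^sub>R v)))"

definition sigma_Pi :: "(real^'d) set \<Rightarrow> (real^'d) set set \<Rightarrow> (real^'d) set" where
  "sigma_Pi \<sigma> P = gen_cone ((\<lambda>\<rho>. - prim_gen \<rho>) ` P \<union> prim_gen ` (rays \<sigma> - P))"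

definition sigma1_Pi :: "(real^'d) set set \<Rightarrow> (real^'d) set" where
  "sigma1_Pi P = gen_cone (prim_gen ` P)"

definition sigma2_Pi :: "(real^'d) set \<Rightarrow> (real^'d) set set \<Rightarrow> (real^'d) set" where
  "sigma2_Pi \<sigma> P = gen_cone (prim_gen ` (rays \<sigma> - P))"

end

theory Submission
  imports Defs
begin

(* Write sigma_Pi as the cone over -A \<union> B, where A and B are the primitive generators of the
   rays in Pi and outside Pi; all of them lie in the pointed cone sigma. If x \<noteq> 0 and -x both lie
   in sigma_Pi, then x = b1 - a1 and -x = b2 - a2 with a_i \<in> cone A, b_i \<in> cone B, so
   a1 + a2 = b1 + b2 lies in cone A \<inter> cone B; were it 0, pointedness of sigma would force
   a1 = b1 = 0 and hence x = 0. Conversely, a nonzero x \<in> cone A \<inter> cone B gives x \<in> cone B and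
   -x \<in> cone (-A), so the line through x lies in sigma_Pi. The only geometry of sigma needed is
   that every ray is a half-line through a nonzero lattice generator, so that its primitive
   generator exists and lies in sigma. *)

lemma convex_cone_sum:
  assumes "convex_cone C" "\<And>i. i \<in> I \<Longrightarrow> f i \<in> C"
  shows "sum f I \<in> C"
  using assms(2)
proof (induction I rule: infinite_finite_induct)
  case (infinite I)
  then show ?case using convex_cone_contains_0[OF assms(1)] by simp
next
  case empty
  then show ?case using convex_cone_contains_0[OF assms(1)] by simp
next
  case (insert i I)
  then show ?case using convex_cone_add[OF assms(1)] by simp
qed

lemma convex_cone_nonneg_combinations:
  "convex_cone {y. \<exists>c. (\<forall>v\<in>S. 0 \<le> c v) \<and> y = (\<Sum>v\<in>S. c v *\<^sub>R v)}"
  (is "convex_cone ?G")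
  unfolding convex_cone_iff
proof (intro conjI ballI allI impI)
  show "0 \<in> ?G" by (auto intro!: exI[of _ "\<lambda>_. 0"])
next
  fix x y assume "x \<in> ?G" "y \<in> ?G"
  then obtain c d where "\<forall>v\<in>S. 0 \<le> c v" "x = (\<Sum>v\<in>S. c v *\<^sub>R v)"
    and "\<forall>v\<in>S. 0 \<le> d v" "y = (\<Sum>v\<in>S. d v *\<^sub>R v)" by blast
  then show "x + y \<in> ?G"
    by (auto intro!: exI[of _ "\<lambda>v. c v + d v"] simp: sum.distrib scaleR_add_left)
next
  fix x and t :: real assume "x \<in> ?G" "0 \<le> t"
  then obtain c where "\<forall>v\<in>S. 0 \<le> c v" "x = (\<Sum>v\<in>S. c v *\<^sub>R v)" by blast
  with \<open>0 \<le> t\<close> show "t *\<^sub>R x \<in> ?G"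
    by (auto intro!: exI[of _ "\<lambda>v. t * c v"] simp: scaleR_sum_right)
qed

lemma convex_cone_hull_finite:
  fixes S :: "'a::real_vector set"
  assumes "finite S"
  shows "convex_cone hull S = {y. \<exists>c. (\<forall>v\<in>S. 0 \<le> c v) \<and> y = (\<Sum>v\<in>S. c v *\<^sub>R v)}"
    (is "_ = ?G")
proof
  show "?G \<subseteq> convex_cone hull S"
    by (auto intro!: convex_cone_sum[OF convex_cone_convex_cone_hull]
        intro: convex_cone_hull_mul hull_inc)
  have "S \<subseteq> ?G"
  proof
    fix v assume "v \<in> S"
    have "(\<Sum>w\<in>S. (if w = v then 1 else 0) *\<^sub>R w) = (\<Sum>w\<in>S. if w = v then w else 0)"
      by (rule sum.cong) auto
    with \<open>v \<in> S\<close> assms have "v = (\<Sum>w\<in>S. (if w = v then 1 else 0) *\<^sub>R w)"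
      by simp
    then show "v \<in> ?G" by (auto intro!: exI[of _ "\<lambda>w. if w = v then 1 else 0"])
  qed
  then show "convex_cone hull S \<subseteq> ?G"
    by (rule hull_minimal) (rule convex_cone_nonneg_combinations)
qed

lemma gen_cone_eq_convex_cone_hull: "finite S \<Longrightarrow> gen_cone S = convex_cone hull S"
  unfolding gen_cone_def by (rule convex_cone_hull_finite[symmetric])

lemma subspace_subset_convex_cone_iff:
  assumes "convex_cone K"
  shows "(\<exists>L. subspace L \<and> L \<noteq> {0} \<and> L \<subseteq> K) \<longleftrightarrow>
         (\<exists>x. x \<noteq> 0 \<and> x \<in> K \<and> - x \<in> K)"
proof
  assume "\<exists>L. subspace L \<and> L \<noteq> {0} \<and> L \<subseteq> K"
  then obtain L x where "subspace L" "L \<subseteq> K" "x \<in> L" "x \<noteq> 0"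
    using subspace_0 by blast
  then show "\<exists>x. x \<noteq> 0 \<and> x \<in> K \<and> - x \<in> K"
    using subspace_neg by blast
next
  assume "\<exists>x. x \<noteq> 0 \<and> x \<in> K \<and> - x \<in> K"
  then obtain x where x: "x \<noteq> 0" "x \<in> K" "- x \<in> K" by blast
  have "span {x} \<subseteq> K"
  proof
    fix y assume "y \<in> span {x}"
    then obtain k where y: "y = k *\<^sub>R x" by (auto simp: span_singleton)
    show "y \<in> K"
    proof (cases "0 \<le> k")
      case True
      then show ?thesis using convex_cone_scaleR[OF assms _ x(2)] y by blast
    next
      case False
      then have "(- k) *\<^sub>R (- x) \<in> K" by (intro convex_cone_scaleR[OF assms _ x(3)]) simp
      then show ?thesis using y by simp
    qed
  qed
  moreover have "span {x} \<noteq> {0}" using x(1) span_base[of x "{x}"] by auto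
  ultimately show "\<exists>L. subspace L \<and> L \<noteq> {0} \<and> L \<subseteq> K"
    using subspace_span by blast
qed

lemma pointed_convex_cone_add_eq_0:
  fixes C :: "'a::group_add set"
  assumes "C \<inter> uminus ` C = {0}" "x \<in> C" "y \<in> C" "x + y = 0"
  shows "x = 0"
proof -
  have "x = - y" using assms(4) eq_neg_iff_add_eq_0 by blast
  then have "x \<in> C \<inter> uminus ` C" using assms(2,3) by simp
  then show ?thesis using assms(1) by simp
qed

lemma convex_cone_hull_uminus_Un:
  "convex_cone hull (uminus ` A \<union> B) =
     {b - a |a b. a \<in> convex_cone hull A \<and> b \<in> convex_cone hull B}"
proof -
  have "convex_cone hull (uminus ` A \<union> B) =
      (\<Union>x\<in>uminus ` (convex_cone hull A). \<Union>y\<in>convex_cone hull B. {x + y})"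
    by (simp add: convex_cone_hull_Un convex_cone_hull_linear_image[OF linear_uminus])
  also have "\<dots> = {b - a |a b. a \<in> convex_cone hull A \<and> b \<in> convex_cone hull B}"
    by (auto simp: add.commute)
  finally show ?thesis .
qed

lemma opposite_points_in_convex_cone_hull_uminus_Un_iff:
  assumes C: "convex_cone C" "C \<inter> uminus ` C = {0}" and "A \<subseteq> C" "B \<subseteq> C"
  shows "(\<exists>x. x \<noteq> 0 \<and> x \<in> convex_cone hull (uminus ` A \<union> B) \<and>
              - x \<in> convex_cone hull (uminus ` A \<union> B))
    \<longleftrightarrow> convex_cone hull A \<inter> convex_cone hull B \<noteq> {0}" (is "?opposite \<longleftrightarrow> _")
proof
  have hA: "convex_cone hull A \<subseteq> C" and hB: "convex_cone hull B \<subseteq> C"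
    using assms by (simp_all add: hull_minimal)
  assume ?opposite
  then obtain x a1 b1 a2 b2 where "x \<noteq> 0" "x = b1 - a1" "- x = b2 - a2"
    and a: "a1 \<in> convex_cone hull A" "a2 \<in> convex_cone hull A"
    and b: "b1 \<in> convex_cone hull B" "b2 \<in> convex_cone hull B"
    unfolding convex_cone_hull_uminus_Un by blast
  then have ab: "a1 + a2 = b1 + b2" by (simp add: algebra_simps)
  show "convex_cone hull A \<inter> convex_cone hull B \<noteq> {0}"
  proof
    assume "convex_cone hull A \<inter> convex_cone hull B = {0}"
    moreover have "a1 + a2 \<in> convex_cone hull A \<inter> convex_cone hull B"
      using a b ab by (metis IntI convex_cone_hull_add)
    ultimately have "a1 + a2 = 0" "b1 + b2 = 0" using ab by auto
    then have "a1 = 0" "b1 = 0"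
      using pointed_convex_cone_add_eq_0[OF C(2)] a b hA hB by blast+
    then show False using \<open>x \<noteq> 0\<close> \<open>x = b1 - a1\<close> by simp
  qed
next
  assume "convex_cone hull A \<inter> convex_cone hull B \<noteq> {0}"
  then obtain x where "x \<noteq> 0" "x \<in> convex_cone hull A" "x \<in> convex_cone hull B"
    using convex_cone_hull_contains_0 by blast
  then have "x \<in> convex_cone hull (uminus ` A \<union> B)" "- x \<in> convex_cone hull (uminus ` A \<union> B)"
    unfolding convex_cone_hull_uminus_Un
    by (metis (mono_tags, lifting) CollectI convex_cone_hull_contains_0 diff_zero,
        metis (mono_tags, lifting) CollectI convex_cone_hull_contains_0 diff_0)
  then show ?opposite
    using \<open>x \<noteq> 0\<close> by blast
qed

definition halfline :: "'a::real_vector \<Rightarrow> 'a set" where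
  "halfline v = (\<lambda>t. t *\<^sub>R v) ` {0..}"

lemma halfline_subset_conic:
  assumes "conic C" "v \<in> C"
  shows "halfline v \<subseteq> C"
  using assms by (auto simp: halfline_def conic_mul)

lemma face_of_conic_summand:
  assumes C: "conic C" and F: "F face_of C" and "a \<in> C" "b \<in> C" "a + b \<in> F"
  shows "a \<in> F"
proof (cases "a = b")
  case True
  have "(1/2) *\<^sub>R (a + b) \<in> F" by (rule conic_mul[OF face_of_conic[OF C F] assms(5)]) simp
  then show ?thesis using True by (simp add: scaleR_2[symmetric])
next
  case False
  have "a + b \<in> open_segment (2 *\<^sub>R a) (2 *\<^sub>R b)"
    unfolding in_segment using False by (intro conjI exI[of _ "1/2"]) (auto simp: algebra_simps)
  then have "2 *\<^sub>R a \<in> F"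
    using face_ofD[OF F _ conic_mul[OF C \<open>a \<in> C\<close>] conic_mul[OF C \<open>b \<in> C\<close>] assms(5)] by auto
  from conic_mul[OF face_of_conic[OF C F] this, of "1/2"] show ?thesis by simp
qed

lemma face_of_convex_cone_hull_generator:
  assumes "finite S" and F: "F face_of convex_cone hull S" and "y \<in> F" "y \<noteq> 0"
  shows "\<exists>v\<in>S. v \<noteq> 0 \<and> v \<in> F"
proof -
  let ?C = "convex_cone hull S"
  have C: "conic ?C" by (rule conic_convex_cone_hull)
  have "y \<in> ?C" using face_of_imp_subset[OF F] \<open>y \<in> F\<close> by auto
  then obtain c where c: "\<forall>v\<in>S. 0 \<le> c v" "y = (\<Sum>v\<in>S. c v *\<^sub>R v)"
    unfolding convex_cone_hull_finite[OF assms(1)] by blast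
  then obtain v where v: "v \<in> S" "c v *\<^sub>R v \<noteq> 0"
    using \<open>y \<noteq> 0\<close> by (metis (no_types, lifting) sum.neutral)
  have cv: "0 < c v" using v c(1) by (metis less_eq_real_def scale_zero_left)
  have "y = c v *\<^sub>R v + (\<Sum>w\<in>S - {v}. c w *\<^sub>R w)"
    using c(2) assms(1) v(1) by (simp add: sum.remove)
  moreover have "(\<Sum>w\<in>S - {v}. c w *\<^sub>R w) \<in> ?C"
    using c(1) by (intro convex_cone_sum[OF convex_cone_convex_cone_hull])
      (auto intro: convex_cone_hull_mul hull_inc)
  moreover have "c v *\<^sub>R v \<in> ?C"
    using cv v(1) by (intro convex_cone_hull_mul hull_inc) auto
  ultimately have "c v *\<^sub>R v \<in> F"
    using face_of_conic_summand[OF C F] \<open>y \<in> F\<close> by simp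
  from conic_mul[OF face_of_conic[OF C F] this, of "1 / c v"] cv have "v \<in> F" by simp
  then show ?thesis using v by auto
qed

lemma pointed_convex_cone_hull_face_aff_dim_1_eq_halfline:
  fixes S :: "'a::euclidean_space set"
  assumes "finite S" and pointed: "convex_cone hull S \<inter> uminus ` (convex_cone hull S) = {0}"
    and F: "F face_of convex_cone hull S" and "aff_dim F = 1"
  shows "\<exists>v\<in>S. v \<noteq> 0 \<and> F = halfline v"
proof -
  let ?C = "convex_cone hull S"
  have conic_F: "conic F" by (rule face_of_conic[OF conic_convex_cone_hull F])
  have "F \<noteq> {}" "F \<noteq> {0}" using \<open>aff_dim F = 1\<close> by auto
  then have "0 \<in> F" and "\<exists>y\<in>F. y \<noteq> 0" using conic_contains_0[OF conic_F] by blast+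
  then obtain v where v: "v \<in> S" "v \<noteq> 0" "v \<in> F"
    using face_of_convex_cone_hull_generator[OF assms(1) F] by blast
  have "F \<subseteq> halfline v"
  proof
    fix w assume "w \<in> F"
    have "collinear F" using \<open>aff_dim F = 1\<close> by (simp add: collinear_aff_dim)
    then have "collinear {0, v, w}"
      by (rule collinear_subset) (use \<open>w \<in> F\<close> v \<open>0 \<in> F\<close> in auto)
    then obtain t where t: "w = t *\<^sub>R v"
      using v(2) unfolding collinear_lemma by (metis scale_zero_left)
    have "0 \<le> t"
    proof (rule ccontr)
      assume "\<not> 0 \<le> t"
      have "w \<in> ?C" using \<open>w \<in> F\<close> face_of_imp_subset[OF F] by auto
      then have "(- 1 / t) *\<^sub>R w \<in> ?C" using \<open>\<not> 0 \<le> t\<close> by (intro convex_cone_hull_mul) auto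
      then have "v \<in> uminus ` ?C" using t \<open>\<not> 0 \<le> t\<close> by (auto intro: image_eqI[of _ _ "- v"])
      moreover have "v \<in> ?C" using v(1) by (rule hull_inc)
      ultimately show False using pointed v(2) by blast
    qed
    then show "w \<in> halfline v" unfolding halfline_def using t by auto
  qed
  moreover have "halfline v \<subseteq> F" by (rule halfline_subset_conic[OF conic_F v(3)])
  ultimately show ?thesis using v by blast
qed

lemma lattice_pt_diff: "lattice_pt x \<Longrightarrow> lattice_pt y \<Longrightarrow> lattice_pt (x - y)"
  unfolding lattice_pt_def by auto

lemma lattice_pt_scaleR_of_nat: "lattice_pt x \<Longrightarrow> lattice_pt (real k *\<^sub>R x)"
  unfolding lattice_pt_def by auto

lemma primitive_vector_exists:
  fixes v :: "real^'d"
  assumes "lattice_pt v" "v \<noteq> 0"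
  shows "\<exists>u\<in>halfline v. u \<noteq> 0 \<and> lattice_pt u \<and>
           (\<forall>w\<in>halfline v. lattice_pt w \<longrightarrow> (\<exists>k::nat. w = real k *\<^sub>R u))"
proof -
  obtain i where "v $ i \<noteq> 0" using \<open>v \<noteq> 0\<close> by (metis vec_eq_iff zero_index)
  moreover obtain j where j: "v $ i = of_int j"
    using \<open>lattice_pt v\<close> unfolding lattice_pt_def by (metis Ints_cases)
  ultimately obtain m :: nat where m: "\<bar>v $ i\<bar> = real m" "m \<ge> 1"
    by (intro that[of "nat \<bar>j\<bar>"]) auto
  \<comment> \<open>With m = |v_i|, every lattice point t v of the half-line has t m \<in> \<nat>; the least such
    positive t m gives the primitive vector, and division with remainder shows it generates.\<close>
  define Q where "Q n \<longleftrightarrow> 0 < n \<and> lattice_pt ((real n / m) *\<^sub>R v)" for n :: nat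
  have "Q m" unfolding Q_def using m \<open>lattice_pt v\<close> by auto
  define n0 where "n0 = (LEAST n. Q n)"
  have "Q n0" unfolding n0_def using \<open>Q m\<close> by (rule LeastI)
  define u where "u = (real n0 / m) *\<^sub>R v"
  have u: "u \<in> halfline v" "u \<noteq> 0" "lattice_pt u"
    using \<open>Q n0\<close> m \<open>v \<noteq> 0\<close> unfolding halfline_def u_def Q_def by auto
  have "\<exists>k::nat. w = real k *\<^sub>R u" if "w \<in> halfline v" "lattice_pt w" for w
  proof -
    obtain t where t: "0 \<le> t" "w = t *\<^sub>R v" using \<open>w \<in> halfline v\<close> unfolding halfline_def by auto
    have "t * v $ i \<in> \<int>" using \<open>lattice_pt w\<close> t(2) unfolding lattice_pt_def by auto
    then have "t * m \<in> \<int>" using t(1) m(1) by (metis Ints_abs abs_mult abs_of_nonneg)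
    then obtain z where "t * m = of_int z" by (rule Ints_cases)
    moreover have "0 \<le> t * m" using t(1) by simp
    ultimately obtain n :: nat where n: "t * m = real n" by (metis of_int_of_nat_eq of_int_0_le_iff nonneg_eq_int)
    define q r where "q = n div n0" and "r = n mod n0"
    have "(real r / m) *\<^sub>R v = w - real q *\<^sub>R u"
    proof -
      have "n = q * n0 + r" unfolding q_def r_def by simp
      then have "real n = real q * real n0 + real r" by simp
      then show ?thesis
        using n m(2) unfolding t(2) u_def by (simp add: field_simps scaleR_left_distrib[symmetric])
    qed
    then have "lattice_pt ((real r / m) *\<^sub>R v)"
      using lattice_pt_diff[OF \<open>lattice_pt w\<close> lattice_pt_scaleR_of_nat[OF u(3)]] by simp
    moreover have "r < n0" using \<open>Q n0\<close> unfolding r_def Q_def by simp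
    ultimately have "r = 0"
      using not_less_Least[of r Q] unfolding n0_def Q_def by auto
    then have "w = real q *\<^sub>R u" using \<open>(real r / m) *\<^sub>R v = w - real q *\<^sub>R u\<close> by simp
    then show ?thesis by blast
  qed
  with u show ?thesis by blast
qed

lemma prim_gen_halfline:
  fixes v :: "real^'d"
  assumes "lattice_pt v" "v \<noteq> 0"
  shows "prim_gen (halfline v) \<in> halfline v"
proof -
  let ?prim = "\<lambda>u. u \<in> halfline v \<and> u \<noteq> 0 \<and> lattice_pt u \<and>
                   (\<forall>w\<in>halfline v. lattice_pt w \<longrightarrow> (\<exists>k::nat. w = real k *\<^sub>R u))"
  obtain u where u: "?prim u" using primitive_vector_exists[OF assms] by blast
  have "x = u" if x: "?prim x" for x
  proof -
    obtain k l :: nat where k: "x = real k *\<^sub>R u" and "u = real l *\<^sub>R x" using u x by blast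
    then have "u = (real l * real k) *\<^sub>R u" by (metis scaleR_scaleR)
    then have "real l * real k = 1" using u by (metis scaleR_cancel_right scaleR_one)
    then have "k = 1" by (metis of_nat_1 of_nat_mult nat_mult_eq_1_iff of_nat_eq_iff)
    then show ?thesis using k by simp
  qed
  with u have "?prim (prim_gen (halfline v))"
    unfolding prim_gen_def by (rule theI)
  then show ?thesis by blast
qed

lemma rays_convex_cone_hull_subset:
  fixes S :: "(real^'d) set"
  assumes "finite S" "strongly_convex (convex_cone hull S)"
  shows "rays (convex_cone hull S) \<subseteq> halfline ` (S - {0})"
  using pointed_convex_cone_hull_face_aff_dim_1_eq_halfline[OF assms(1)] assms(2)
  unfolding rays_def strongly_convex_def by blast

lemma prim_gen_ray_mem:
  fixes S :: "(real^'d) set"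
  assumes "finite S" "\<forall>v\<in>S. lattice_pt v" "strongly_convex (convex_cone hull S)"
    and "\<rho> \<in> rays (convex_cone hull S)"
  shows "prim_gen \<rho> \<in> convex_cone hull S"
proof -
  obtain v where "v \<in> S" "v \<noteq> 0" "\<rho> = halfline v"
    using rays_convex_cone_hull_subset[OF assms(1,3)] assms(4) by blast
  then have "prim_gen \<rho> \<in> halfline v" using assms(2) prim_gen_halfline by blast
  moreover have "halfline v \<subseteq> convex_cone hull S"
    using \<open>v \<in> S\<close> by (intro halfline_subset_conic conic_convex_cone_hull hull_inc)
  ultimately show ?thesis by blast
qed

theorem mainTheorem7:
  fixes \<sigma> :: "(real^'d) set" and P :: "(real^'d) set set"
  assumes "rational_polyhedral_cone \<sigma>"
    and "strongly_convex \<sigma>"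
    and "aff_dim \<sigma> = int CARD('d)"
    and "P \<subseteq> rays \<sigma>"
  shows "(\<exists>L. subspace L \<and> L \<noteq> {0} \<and> L \<subseteq> sigma_Pi \<sigma> P)
           \<longleftrightarrow> sigma1_Pi P \<inter> sigma2_Pi \<sigma> P \<noteq> {0}"
proof -
  obtain S where S: "finite S" "\<forall>v\<in>S. lattice_pt v" and \<sigma>: "\<sigma> = convex_cone hull S"
    using assms(1) gen_cone_eq_convex_cone_hull unfolding rational_polyhedral_cone_def by metis
  have "finite (rays \<sigma>)"
    using rays_convex_cone_hull_subset[OF S(1)] assms(2) S(1) \<sigma> finite_subset by blast
  define A B where "A = prim_gen ` P" and "B = prim_gen ` (rays \<sigma> - P)"
  have "finite A" "finite B"
    unfolding A_def B_def using \<open>finite (rays \<sigma>)\<close> assms(4) finite_subset by blast+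
  then have cones: "sigma_Pi \<sigma> P = convex_cone hull (uminus ` A \<union> B)"
    "sigma1_Pi P = convex_cone hull A" "sigma2_Pi \<sigma> P = convex_cone hull B"
    unfolding sigma_Pi_def sigma1_Pi_def sigma2_Pi_def A_def B_def image_image[symmetric]
    by (simp_all add: gen_cone_eq_convex_cone_hull)
  have AB: "A \<subseteq> \<sigma>" "B \<subseteq> \<sigma>"
    using prim_gen_ray_mem[OF S] assms(2,4) \<sigma> unfolding A_def B_def by blast+
  have pointed: "convex_cone \<sigma>" "\<sigma> \<inter> uminus ` \<sigma> = {0}"
    using assms(2) \<sigma> convex_cone_convex_cone_hull unfolding strongly_convex_def by auto
  show ?thesis
    unfolding cones subspace_subset_convex_cone_iff[OF convex_cone_convex_cone_hull]
    by (rule opposite_points_in_convex_cone_hull_uminus_Un_iff[OF pointed AB])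
qed

end
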